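(* There exist a positive integer $N$ and a doubly-stochastic $N\times N$ matrix $A$ such that $$\mathrm{per}(A)\ <\ LMS(A):=\prod_{1\le i\le N}\ \sum_{1\le j\le N}A(i,j)\prod_{k\ne i}\bigl(1-A(k,j)\bigr).$$
   Context: A doubly-stochastic matrix is an entrywise non-negative square matrix all of whose row and column sums equal $1$; $\mathrm{per}$ is the permanent. (This disproves the conjecture that $\mathrm{per}(A)\ge LMS(A)$ for all doubly-stochastic $A$.) *)

theory Defs
  imports Complex_Main "HOL-Combinatorics.Permutations"
begin

text \<open>N x N real matrices are represented as functions nat => nat => real,
  with indices ranging over {..<N}.\<close>

definition doubly_stochastic :: "nat \<Rightarrow> (nat \<Rightarrow> nat \<Rightarrow> real) \<Rightarrow> bool" where
  "doubly_stochastic N A \<longleftrightarrow>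
     (\<forall>i<N. \<forall>j<N. 0 \<le> A i j) \<and>
     (\<forall>i<N. (\<Sum>j<N. A i j) = 1) \<and>
     (\<forall>j<N. (\<Sum>i<N. A i j) = 1)"

definition per :: "nat \<Rightarrow> (nat \<Rightarrow> nat \<Rightarrow> real) \<Rightarrow> real" where
  "per N A = (\<Sum>p | p permutes {..<N}. \<Prod>i<N. A i (p i))"

definition LMS :: "nat \<Rightarrow> (nat \<Rightarrow> nat \<Rightarrow> real) \<Rightarrow> real" where
  "LMS N A = (\<Prod>i<N. \<Sum>j<N. A i j * (\<Prod>k\<in>{..<N} - {i}. 1 - A k j))"

end

theory Submission
  imports Defs
begin

text \<open>The counterexample is an explicit sparse 14 x 14 matrix with entries in hundredths and
  two to four nonzero entries per row. Expanding the permanent along its rows only ever visits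
  nonzero entries, so it becomes a small exact integer computation divided by 100^14; LMS is
  an integer divided by 100^196. Comparing the two integer numerators gives the inequality.\<close>

definition partial_injections :: "nat \<Rightarrow> 'a set \<Rightarrow> (nat \<Rightarrow> 'a) set" where
  "partial_injections k S = {f \<in> {..<k} \<rightarrow>\<^sub>E S. inj_on f {..<k}}"

definition partial_per :: "(nat \<Rightarrow> 'a \<Rightarrow> 'b::comm_semiring_1) \<Rightarrow> nat \<Rightarrow> 'a set \<Rightarrow> 'b" where
  "partial_per A k S = (\<Sum>f\<in>partial_injections k S. \<Prod>i<k. A i (f i))"

lemma finite_partial_injections: "finite S \<Longrightarrow> finite (partial_injections k S)"
  unfolding partial_injections_def by (rule finite_subset[OF _ finite_PiE[of "{..<k}"]]) auto

lemma partial_per_0 [simp]: "partial_per A 0 S = 1"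
  unfolding partial_per_def partial_injections_def by simp

lemma partial_per_Suc:
  assumes "finite S"
  shows "partial_per A (Suc k) S = (\<Sum>j\<in>S. A k j * partial_per A k (S - {j}))"
proof -
  have "(\<Sum>j\<in>S. A k j * partial_per A k (S - {j}))
      = (\<Sum>(j, g)\<in>Sigma S (\<lambda>j. partial_injections k (S - {j})). A k j * (\<Prod>i<k. A i (g i)))"
    unfolding partial_per_def sum_distrib_left
    using assms by (intro sum.Sigma) (auto intro: finite_partial_injections)
  also have "\<dots> = (\<Sum>f\<in>partial_injections (Suc k) S. \<Prod>i<Suc k. A i (f i))"
  proof (rule sum.reindex_bij_witness[where i = "\<lambda>f. (f k, f(k := undefined))"
                                          and j = "\<lambda>(j, g). g(k := j)"])
    fix a assume "a \<in> Sigma S (\<lambda>j. partial_injections k (S - {j}))"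
    then obtain j g where a: "a = (j, g)" and j: "j \<in> S" and g: "g \<in> partial_injections k (S - {j})"
      by auto
    from g have "g k = undefined"
      unfolding partial_injections_def by (auto simp: PiE_def extensional_def)
    then show "(\<lambda>f. (f k, f(k := undefined))) ((\<lambda>(j, g). g(k := j)) a) = a"
      by (auto simp: a)
    show "(\<lambda>(j, g). g(k := j)) a \<in> partial_injections (Suc k) S"
      using g j unfolding a partial_injections_def
      by (auto simp: PiE_def extensional_def lessThan_Suc inj_on_def)
    show "(\<Prod>i<Suc k. A i ((\<lambda>(j, g). g(k := j)) a i)) = (case a of (j, g) \<Rightarrow> A k j * (\<Prod>i<k. A i (g i)))"
      by (simp add: a lessThan_Suc mult.commute)
  next
    fix f assume "f \<in> partial_injections (Suc k) S"
    then have f: "f \<in> {..<Suc k} \<rightarrow>\<^sub>E S" and inj: "inj_on f {..<Suc k}"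
      unfolding partial_injections_def by auto
    show "(\<lambda>(j, g). g(k := j)) ((\<lambda>f. (f k, f(k := undefined))) f) = f"
      by auto
    have "f(k := undefined) \<in> partial_injections k (S - {f k})"
      using f inj unfolding partial_injections_def PiE_def extensional_def inj_on_def by auto
    with f show "(\<lambda>f. (f k, f(k := undefined))) f \<in> Sigma S (\<lambda>j. partial_injections k (S - {j}))"
      by auto
  qed
  finally show ?thesis
    unfolding partial_per_def ..
qed

lemma partial_per_Suc_support:
  assumes "finite S" and "distinct js" and "\<And>j. j \<notin> set js \<Longrightarrow> A k j = 0"
  shows "partial_per A (Suc k) S = (\<Sum>j\<leftarrow>js. if j \<in> S then A k j * partial_per A k (S - {j}) else 0)"
proof -
  have "partial_per A (Suc k) S = (\<Sum>j\<in>S \<inter> set js. A k j * partial_per A k (S - {j}))"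
    unfolding partial_per_Suc[OF assms(1)]
    using assms by (intro sum.mono_neutral_right) auto
  also have "\<dots> = (\<Sum>j\<in>set js. if j \<in> S then A k j * partial_per A k (S - {j}) else 0)"
    by (subst Int_commute, rule sum.inter_restrict) simp
  finally show ?thesis
    using assms(2) by (simp add: sum_list_distinct_conv_sum_set)
qed

lemma per_eq_partial_per: "per N A = partial_per A N {..<N}"
  unfolding per_def partial_per_def
proof (rule sum.reindex_bij_witness[where i = "\<lambda>f i. if i < N then f i else i"
                                        and j = "\<lambda>p. restrict p {..<N}"])
  fix p assume "p \<in> {p. p permutes {..<N}}"
  then have p: "p permutes {..<N}" by simp
  show "(\<lambda>i. if i < N then restrict p {..<N} i else i) = p"
    using p by (auto simp: permutes_not_in)
  show "restrict p {..<N} \<in> partial_injections N {..<N}"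
    unfolding partial_injections_def using permutes_inj_on[OF p] permutes_in_image[OF p] by auto
  show "(\<Prod>i<N. A i (restrict p {..<N} i)) = (\<Prod>i<N. A i (p i))"
    by simp
next
  fix f assume "f \<in> partial_injections N {..<N}"
  then have f: "f \<in> {..<N} \<rightarrow>\<^sub>E {..<N}" and inj: "inj_on f {..<N}"
    unfolding partial_injections_def by auto
  let ?p = "\<lambda>i. if i < N then f i else i"
  show "restrict ?p {..<N} = f"
    using f by (auto simp: PiE_def extensional_def)
  have "f ` {..<N} = {..<N}"
    using f inj by (intro endo_inj_surj) auto
  then have "bij_betw ?p {..<N} {..<N}"
    using inj unfolding bij_betw_def inj_on_def by (auto simp: image_def)
  then show "?p \<in> {p. p permutes {..<N}}"
    by (auto intro!: bij_imp_permutes split: if_splits)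
qed

definition sparse_rows_wf :: "nat \<Rightarrow> (nat \<times> nat) list list \<Rightarrow> bool" where
  "sparse_rows_wf n R \<longleftrightarrow> (\<forall>r\<in>set R. distinct (map fst r) \<and> (\<forall>(j, w)\<in>set r. j < n))"

definition sparse_entry :: "(nat \<times> nat) list list \<Rightarrow> nat \<Rightarrow> nat \<Rightarrow> nat" where
  "sparse_entry R i j =
     (if i < length R then case map_of (R ! i) j of None \<Rightarrow> 0 | Some w \<Rightarrow> w else 0)"

text \<open>The rows are listed last row first, and \<open>used\<close> holds the columns already taken by the
  rows processed so far; this mirrors the expansion along the last row in \<open>partial_per_Suc\<close>.\<close>

fun sparse_per :: "(nat \<times> nat) list list \<Rightarrow> nat list \<Rightarrow> nat" where
  "sparse_per [] used = 1"
| "sparse_per (r # rs) used =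
     (\<Sum>(j, w)\<leftarrow>r. if j \<in> set used then 0 else w * sparse_per rs (j # used))"

lemma sparse_entry_eq:
  assumes "sparse_rows_wf n R" and "i < length R" and "(j, w) \<in> set (R ! i)"
  shows "sparse_entry R i j = w"
  using assms by (auto simp: sparse_entry_def sparse_rows_wf_def)

lemma sparse_entry_eq_0:
  assumes "j \<notin> set (map fst (R ! i))"
  shows "sparse_entry R i j = 0"
proof -
  have "map_of (R ! i) j = None"
    using assms by (simp add: map_of_eq_None_iff)
  then show ?thesis
    by (simp add: sparse_entry_def)
qed

lemma of_nat_sum_list_map: "of_nat (\<Sum>x\<leftarrow>xs. f x) = (\<Sum>x\<leftarrow>xs. of_nat (f x))"
  by (induction xs) simp_all

lemma partial_per_sparse_entry:
  assumes wf: "sparse_rows_wf n R" and "k \<le> length R"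
  shows "partial_per (\<lambda>i j. real (sparse_entry R i j) / d) k ({..<n} - set used)
           = real (sparse_per (rev (take k R)) used) / d ^ k"
  using \<open>k \<le> length R\<close>
proof (induction k arbitrary: used)
  case 0
  then show ?case by simp
next
  case (Suc k)
  let ?A = "\<lambda>i j. real (sparse_entry R i j) / d"
  let ?S = "{..<n} - set used"
  have k: "k < length R" using Suc.prems by simp
  have row: "distinct (map fst (R ! k))" "\<And>j w. (j, w) \<in> set (R ! k) \<Longrightarrow> j < n"
    using wf nth_mem[OF k] unfolding sparse_rows_wf_def by auto
  have summand_eq: "(if j \<in> ?S then ?A k j * partial_per ?A k (?S - {j}) else 0)
               = real (if j \<in> set used then 0 else w * sparse_per (rev (take k R)) (j # used)) / d ^ Suc k"
    if "(j, w) \<in> set (R ! k)" for j w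
  proof (cases "j \<in> set used")
    case False
    have "?S - {j} = {..<n} - set (j # used)" by auto
    moreover have "j \<in> ?S" using False row(2)[OF that] by simp
    ultimately show ?thesis
      using False Suc.IH[of "j # used"] k sparse_entry_eq[OF wf k that] by simp
  qed simp
  have "partial_per ?A (Suc k) ?S
      = (\<Sum>j\<leftarrow>map fst (R ! k). if j \<in> ?S then ?A k j * partial_per ?A k (?S - {j}) else 0)"
    using row(1) by (intro partial_per_Suc_support) (auto simp: sparse_entry_eq_0)
  also have "\<dots> = (\<Sum>(j, w)\<leftarrow>R ! k.
                    real (if j \<in> set used then 0 else w * sparse_per (rev (take k R)) (j # used)) / d ^ Suc k)"
    unfolding map_map o_def
    by (intro arg_cong[where f = sum_list] map_cong refl)
       (clarsimp simp only: fst_conv prod.case, rule summand_eq)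
  also have "\<dots> = real (sparse_per (R ! k # rev (take k R)) used) / d ^ Suc k"
    by (simp add: divide_inverse sum_list_mult_const case_prod_unfold o_def of_nat_sum_list_map)
  finally show ?case
    using k by (simp add: take_Suc_conv_app_nth)
qed

lemma per_sparse_entry:
  assumes "sparse_rows_wf (length R) R"
  shows "per (length R) (\<lambda>i j. real (sparse_entry R i j) / d)
           = real (sparse_per (rev R) []) / d ^ length R"
  using partial_per_sparse_entry[OF assms, where k = "length R" and used = "[]"]
  by (simp add: per_eq_partial_per)

lemma sum_lessThan_eq_sum_list_upt: "(\<Sum>i<n. f i) = (\<Sum>i\<leftarrow>[0..<n]. f i)"
  unfolding atLeast_upt sum.set_conv_list by simp

lemma doubly_stochastic_scaled:
  assumes "d > 0"
    and "\<And>i. i < N \<Longrightarrow> (\<Sum>j<N. B i j) = d"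
    and "\<And>j. j < N \<Longrightarrow> (\<Sum>i<N. B i j) = d"
  shows "doubly_stochastic N (\<lambda>i j. real (B i j) / real d)"
  using assms unfolding doubly_stochastic_def
  by (simp add: sum_divide_distrib[symmetric] flip: of_nat_sum)

definition lms_numerator :: "nat \<Rightarrow> nat \<Rightarrow> (nat \<Rightarrow> nat \<Rightarrow> nat) \<Rightarrow> nat" where
  "lms_numerator d N B = (\<Prod>i<N. \<Sum>j<N. B i j * (\<Prod>k\<in>{..<N} - {i}. d - B k j))"

lemma lms_numerator_code:
  "lms_numerator d N B =
     (\<Prod>i\<leftarrow>[0..<N]. \<Sum>j\<leftarrow>[0..<N]. B i j * (\<Prod>k\<leftarrow>filter (\<lambda>k. k \<noteq> i) [0..<N]. d - B k j))"
proof -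
  have "{..<N} - {i} = set (filter (\<lambda>k. k \<noteq> i) [0..<N])" for i
    by auto
  then show ?thesis
    unfolding lms_numerator_def atLeast_upt
    by (simp add: prod.distinct_set_conv_list sum.distinct_set_conv_list del: set_filter set_upt)
qed

lemma LMS_scaled:
  assumes "d > 0" and "\<And>k j. k < N \<Longrightarrow> j < N \<Longrightarrow> B k j \<le> d"
  shows "LMS N (\<lambda>i j. real (B i j) / real d) = real (lms_numerator d N B) / real d ^ (N * N)"
proof -
  let ?A = "\<lambda>i j. real (B i j) / real d"
  have summand: "?A i j * (\<Prod>k\<in>{..<N} - {i}. 1 - ?A k j)
      = real (B i j * (\<Prod>k\<in>{..<N} - {i}. d - B k j)) / real d ^ N"
    if "i < N" "j < N" for i j
  proof -
    have "(\<Prod>k\<in>{..<N} - {i}. 1 - ?A k j) = (\<Prod>k\<in>{..<N} - {i}. real (d - B k j) / real d)"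
      using assms that by (intro prod.cong) (auto simp: of_nat_diff field_simps)
    also have "\<dots> = real (\<Prod>k\<in>{..<N} - {i}. d - B k j) / real d ^ (N - 1)"
      using that by (simp add: prod_dividef)
    finally show ?thesis
      using that \<open>d > 0\<close> by (simp add: power_eq_if)
  qed
  have "LMS N ?A = (\<Prod>i<N. \<Sum>j<N. real (B i j * (\<Prod>k\<in>{..<N} - {i}. d - B k j)) / real d ^ N)"
    unfolding LMS_def by (intro prod.cong sum.cong refl summand) auto
  also have "\<dots> = (\<Prod>i<N. real (\<Sum>j<N. B i j * (\<Prod>k\<in>{..<N} - {i}. d - B k j)) / real d ^ N)"
    by (simp only: sum_divide_distrib[symmetric] of_nat_sum[symmetric])
  also have "\<dots> = real (lms_numerator d N B) / real d ^ (N * N)"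
    by (simp add: lms_numerator_def prod_dividef power_mult)
  finally show ?thesis .
qed

definition counterexample_rows :: "(nat \<times> nat) list list" where
  "counterexample_rows =
    [[(0, 29), (1, 43), (7, 28)],
     [(7, 72), (9, 28)],
     [(2, 4), (4, 1), (9, 72), (12, 23)],
     [(1, 57), (5, 20), (8, 23)],
     [(0, 71), (3, 22), (11, 7)],
     [(4, 16), (8, 77), (11, 7)],
     [(5, 80), (10, 20)],
     [(6, 23), (12, 77)],
     [(11, 86), (13, 14)],
     [(4, 83), (13, 17)],
     [(10, 80), (13, 20)],
     [(2, 22), (3, 78)],
     [(6, 51), (13, 49)],
     [(2, 74), (6, 26)]]"

definition counterexample :: "nat \<Rightarrow> nat \<Rightarrow> real" where
  "counterexample i j = real (sparse_entry counterexample_rows i j) / 100"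

lemma length_counterexample_rows: "length counterexample_rows = 14"
  by (simp add: counterexample_rows_def)

lemma sparse_rows_wf_counterexample: "sparse_rows_wf 14 counterexample_rows"
  by (simp add: sparse_rows_wf_def counterexample_rows_def)

lemma counterexample_row_sums:
  assumes "i < 14"
  shows "(\<Sum>j<14. sparse_entry counterexample_rows i j) = 100"
proof -
  have "list_all (\<lambda>i. (\<Sum>j\<leftarrow>[0..<14]. sparse_entry counterexample_rows i j) = 100) [0..<14]"
    by (simp add: sparse_entry_def counterexample_rows_def upt_rec)
  then show ?thesis
    using assms by (simp add: list_all_iff sum_lessThan_eq_sum_list_upt)
qed

lemma counterexample_column_sums:
  assumes "j < 14"
  shows "(\<Sum>i<14. sparse_entry counterexample_rows i j) = 100"
proof -
  have "list_all (\<lambda>j. (\<Sum>i\<leftarrow>[0..<14]. sparse_entry counterexample_rows i j) = 100) [0..<14]"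
    by (simp add: sparse_entry_def counterexample_rows_def upt_rec)
  then show ?thesis
    using assms by (simp add: list_all_iff sum_lessThan_eq_sum_list_upt)
qed

lemma sparse_per_counterexample: "sparse_per (rev counterexample_rows) [] = 7515146068869226269081600"
  by (simp add: counterexample_rows_def split del: if_split)

lemma counterexample_numerators_less:
  "sparse_per (rev counterexample_rows) [] * 100 ^ 182
     < lms_numerator 100 14 (sparse_entry counterexample_rows)"
  unfolding sparse_per_counterexample lms_numerator_code
  by (simp add: sparse_entry_def counterexample_rows_def upt_rec split del: if_split)

theorem mainTheorem15:
  shows "\<exists>N::nat. N > 0 \<and> (\<exists>A. doubly_stochastic N A \<and> per N A < LMS N A)"
proof (intro exI conjI)
  let ?B = "sparse_entry counterexample_rows"
  have entry_le: "?B i j \<le> 100" if "i < 14" "j < 14" for i j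
    using member_le_sum[of j "{..<14}" "?B i"] counterexample_row_sums[OF that(1)] that(2) by simp
  show "(14::nat) > 0" by simp
  show "doubly_stochastic 14 counterexample"
    using doubly_stochastic_scaled[of 100 14 ?B] counterexample_row_sums counterexample_column_sums
    by (simp add: counterexample_def[abs_def])
  have "per 14 counterexample = real (sparse_per (rev counterexample_rows) [] * 100 ^ 182) / 100 ^ 196"
    using per_sparse_entry[of counterexample_rows 100, unfolded length_counterexample_rows,
                           OF sparse_rows_wf_counterexample]
    by (simp add: counterexample_def[abs_def])
  also have "\<dots> < real (lms_numerator 100 14 ?B) / 100 ^ 196"
    using counterexample_numerators_less by (simp add: divide_strict_right_mono)
  also have "\<dots> = LMS 14 counterexample"
    using LMS_scaled[of 100 14 ?B] entry_le by (simp add: counterexample_def[abs_def])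
  finally show "per 14 counterexample < LMS 14 counterexample" .
qed

end
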